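(* For every infinite dimensional real Banach space $X$ there is a locally convex Hausdorff topology $\tau$ on $X$, weaker than the norm topology, and a $\tau$-compact convex set $K\subset X$ which is not remotal from $0$ (i.e. there is no $k\in K$ with $\|k\|=\sup\{\|k'\|:k'\in K\}$).
   Context: A set $C$ in a Banach space is remotal from $z$ if there exists $c_0\in C$ with $\|z-c_0\|=\sup\{\|z-c\|:c\in C\}$. *)

theory Defs
  imports "HOL-Analysis.Analysis"
begin

definition remotal :: "'a::real_normed_vector set \<Rightarrow> 'a \<Rightarrow> bool" where
  "remotal C z \<longleftrightarrow> (\<exists>c0\<in>C. norm (z - c0) = (SUP c\<in>C. norm (z - c)))"

definition locally_convex_topology :: "'a::real_vector topology \<Rightarrow> bool" where
  "locally_convex_topology \<tau> \<longleftrightarrow>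
     topspace \<tau> = UNIV \<and>
     continuous_map (prod_topology \<tau> \<tau>) \<tau> (\<lambda>(x, y). x + y) \<and>
     continuous_map (prod_topology (euclidean :: real topology) \<tau>) \<tau> (\<lambda>(c, x). c *\<^sub>R x) \<and>
     (\<forall>x U. openin \<tau> U \<and> x \<in> U \<longrightarrow> (\<exists>V. openin \<tau> V \<and> convex V \<and> x \<in> V \<and> V \<subseteq> U))"

end

theory Submission
  imports Defs
begin

text \<open>
  Choose unit-bounded vectors x n with norms r n increasing to 1 and norming functionals
  g k of norm at most one such that g k (x n) = 0 for k < n and such that the g's separate the
  points of the closed span of the x's (they norm a dense sequence of rational combinations).
  The norm p w = dist (w, span x) + \<Sum>k. 2^(-k) |g k w| is dominated by 3\<parallel>w\<parallel>, so its metric topology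
  is locally convex, Hausdorff and coarser than the norm topology.  For K, the image of the
  sub-probability sequences a under a \<mapsto> \<Sum>n. a n x n, the map is continuous from the (compact)
  product topology into the p-topology, so K is p-compact and convex.  Every point of K has
  norm < 1 while x n \<in> K have norms tending to 1, so no point of K is farthest from 0.
\<close>

text \<open>A norming graph for x is a linear subspace of
  X \<times> \<real> lying below the graph of the norm and containing (x, \<parallel>x\<parallel>); it is the graph of a
  partial linear functional dominated by the norm that norms x.\<close>
definition norming_graph :: "'a::real_normed_vector \<Rightarrow> ('a \<times> real) set \<Rightarrow> bool" where
  "norming_graph x G \<longleftrightarrow> subspace G \<and> (x, norm x) \<in> G \<and> (\<forall>(a, b) \<in> G. b \<le> norm a)"

text \<open>Domination forces a norming graph to be single-valued.\<close>
lemma norming_graph_functional: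
  assumes G: "norming_graph x G" and "(a, b) \<in> G" "(a, c) \<in> G"
  shows "b = c"
proof -
  have sub: "subspace G" and dom: "\<And>a b. (a, b) \<in> G \<Longrightarrow> b \<le> norm a"
    using G unfolding norming_graph_def by auto
  have "(0, b - c) \<in> G" "(0, c - b) \<in> G"
    using subspace_diff[OF sub assms(2,3)] subspace_diff[OF sub assms(3,2)] by simp_all
  from dom[OF this(1)] dom[OF this(2)] show ?thesis by simp
qed

text \<open>The one-dimensional extension step: a norming graph whose domain misses z extends to
  z by a value c squeezed between the lower and upper bounds that domination imposes.\<close>
lemma norming_graph_extend:
  assumes G: "norming_graph x G" and z: "z \<notin> fst ` G"
  shows "\<exists>G'. norming_graph x G' \<and> G \<subset> G'"
proof -
  have sub: "subspace G" and xG: "(x, norm x) \<in> G" and dom: "\<And>a b. (a, b) \<in> G \<Longrightarrow> b \<le> norm a"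
    using G unfolding norming_graph_def by auto
  have gap: "b1 - norm (a1 - z) \<le> norm (a2 + z) - b2" if "(a1, b1) \<in> G" "(a2, b2) \<in> G" for a1 b1 a2 b2
  proof -
    have "b1 + b2 \<le> norm (a1 + a2)" using dom subspace_add[OF sub that] by simp
    also have "\<dots> \<le> norm (a1 - z) + norm (a2 + z)"
      using norm_triangle_ineq[of "a1 - z" "a2 + z"] by simp
    finally show ?thesis by simp
  qed
  define c where "c = Sup ((\<lambda>(a, b). b - norm (a - z)) ` G)"
  have G0: "(0, 0) \<in> G" using subspace_0[OF sub] by (simp add: zero_prod_def)
  have lower: "b - norm (a - z) \<le> c" if "(a, b) \<in> G" for a b
    unfolding c_def using gap[OF _ G0] that by (intro cSup_upper) (auto intro!: bdd_aboveI2)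
  have upper: "c \<le> norm (a + z) - b" if "(a, b) \<in> G" for a b
    unfolding c_def using gap that G0 by (intro cSup_least) auto
  define G' where "G' = span (insert (z, c) G)"
  have mem: "p \<in> G' \<longleftrightarrow> (\<exists>t. p - t *\<^sub>R (z, c) \<in> G)" for p
    unfolding G'_def span_insert span_eq_iff[THEN iffD2, OF sub] by simp
  have "b \<le> norm a" if "(a, b) \<in> G'" for a b
  proof -
    from that obtain t where "(a, b) - t *\<^sub>R (z, c) \<in> G" unfolding mem by blast
    then have t: "(a - t *\<^sub>R z, b - t * c) \<in> G" by simp
    show ?thesis
    proof (cases t "0::real" rule: linorder_cases)
      case equal then show ?thesis using t dom by simp
    next
      case greater
      have "(inverse t *\<^sub>R (a - t *\<^sub>R z), inverse t * (b - t * c)) \<in> G"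
        using subspace_scale[OF sub t, of "inverse t"] by simp
      from upper[OF this] greater have "inverse t * b \<le> norm (inverse t *\<^sub>R a)"
        by (simp add: algebra_simps)
      with greater show ?thesis by (simp add: field_simps)
    next
      case less
      have "(- inverse t *\<^sub>R (a - t *\<^sub>R z), - inverse t * (b - t * c)) \<in> G"
        using subspace_scale[OF sub t, of "- inverse t"] by simp
      from lower[OF this] less have "- inverse t * b \<le> norm (inverse t *\<^sub>R a)"
        by (simp add: algebra_simps)
      with less show ?thesis by (simp add: field_simps)
    qed
  qed
  moreover have "G \<subseteq> G'" "(z, c) \<in> G'" unfolding G'_def by (auto intro: span_base)
  ultimately have "norming_graph x G'"
    using xG unfolding norming_graph_def G'_def by blast
  moreover have "(z, c) \<notin> G" using z by force
  ultimately show ?thesis using \<open>G \<subseteq> G'\<close> \<open>(z, c) \<in> G'\<close> by blast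
qed

lemma norming_graph_chain_Union:
  assumes ne: "C \<noteq> {}" and ch: "subset.chain {G. norming_graph x G} C"
  shows "norming_graph x (\<Union>C)"
proof -
  have graphs: "\<And>G. G \<in> C \<Longrightarrow> norming_graph x G"
    and comparable: "\<And>G H. G \<in> C \<Longrightarrow> H \<in> C \<Longrightarrow> G \<subseteq> H \<or> H \<subseteq> G"
    using ch unfolding subset.chain_def by auto
  have "subspace (\<Union>C)"
    unfolding subspace_def
  proof (intro conjI ballI allI)
    show "0 \<in> \<Union>C" using ne graphs subspace_0 unfolding norming_graph_def by blast
  next
    fix p q assume "p \<in> \<Union>C" "q \<in> \<Union>C"
    then obtain G where "G \<in> C" "p \<in> G" "q \<in> G" using comparable by blast
    then show "p + q \<in> \<Union>C" using graphs subspace_add unfolding norming_graph_def by blast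
  next
    fix r p assume "p \<in> \<Union>C"
    then show "r *\<^sub>R p \<in> \<Union>C" using graphs subspace_scale unfolding norming_graph_def by blast
  qed
  then show ?thesis using ne graphs unfolding norming_graph_def by blast
qed

text \<open>The norming corollary of the Hahn--Banach theorem: every vector is normed by a linear
  functional of norm at most one.  The functional is read off a maximal norming graph.\<close>
lemma norming_functional_exists:
  fixes x :: "'a::real_normed_vector"
  shows "\<exists>f. bounded_linear f \<and> (\<forall>y. \<bar>f y\<bar> \<le> norm y) \<and> f x = norm x"
proof -
  have "norming_graph x (span {(x, norm x)})"
    unfolding norming_graph_def
    by (intro conjI subspace_span span_base singletonI) (auto simp: span_singleton intro: mult_right_mono)
  then obtain G where G: "norming_graph x G"
    and maximal: "\<And>H. norming_graph x H \<Longrightarrow> G \<subseteq> H \<Longrightarrow> H = G"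
    using subset_Zorn_nonempty[of "{G. norming_graph x G}"] norming_graph_chain_Union by blast
  have total: "y \<in> fst ` G" for y
    using norming_graph_extend[OF G] maximal by blast
  define f where "f y = (THE b. (y, b) \<in> G)" for y
  have graph: "(y, b) \<in> G \<longleftrightarrow> b = f y" for y b
  proof -
    obtain b' where "(y, b') \<in> G" using total[of y] by force
    then have unique: "\<exists>!b. (y, b) \<in> G" using norming_graph_functional[OF G] by blast
    show ?thesis
      using the1_equality[OF unique] theI'[OF unique] unfolding f_def by blast
  qed
  have sub: "subspace G" and dom: "\<And>a b. (a, b) \<in> G \<Longrightarrow> b \<le> norm a"
    using G unfolding norming_graph_def by auto
  have fG: "(y, f y) \<in> G" for y using graph by simp
  have add: "f (a + b) = f a + f b" for a b
    using subspace_add[OF sub fG fG] graph by simp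
  have scale: "f (r *\<^sub>R a) = r * f a" for r a
    using subspace_scale[OF sub fG, of r] graph by simp
  have bound: "\<bar>f y\<bar> \<le> norm y" for y
    using dom[OF fG, of y] dom[OF fG, of "-y"] scale[of "-1" y] by auto
  have "bounded_linear f"
    by (rule bounded_linear_intro[of _ 1]) (use add scale bound in auto)
  moreover have "f x = norm x" using G graph unfolding norming_graph_def by auto
  ultimately show ?thesis using bound by blast
qed

lemma common_kernel_not_finite_dim:
  fixes G :: "nat \<Rightarrow> 'a::real_vector \<Rightarrow> real"
  assumes inf: "\<forall>B :: 'a set. finite B \<longrightarrow> span B \<noteq> UNIV"
    and lin: "\<And>k. k < n \<Longrightarrow> linear (G k)" and B: "finite B"
  shows "\<not> {y. \<forall>k<n. G k y = 0} \<subseteq> span B"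
  using lin B
proof (induction n arbitrary: B)
  case 0 then show ?case using inf by auto
next
  case (Suc n)
  define V where "V = {y. \<forall>k<n. G k y = 0}"
  have lin_n: "linear (G n)" and IH: "\<And>B. finite B \<Longrightarrow> \<not> V \<subseteq> span B"
    using Suc unfolding V_def by auto
  have split: "{y. \<forall>k<Suc n. G k y = 0} = V \<inter> {y. G n y = 0}"
    unfolding V_def using less_Suc_eq by auto
  show ?case
  proof
    assume small: "{y. \<forall>k<Suc n. G k y = 0} \<subseteq> span B"
    then obtain v0 where v0: "v0 \<in> V" "G n v0 \<noteq> 0"
      using IH[OF \<open>finite B\<close>] split by blast
    have "V \<subseteq> span (insert v0 B)"
    proof
      fix v assume v: "v \<in> V"
      define w where "w = v - (G n v / G n v0) *\<^sub>R v0"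
      have "w \<in> V" using v v0 Suc.prems(1) unfolding w_def V_def
        by (auto simp: linear_diff linear_cmul)
      moreover have "G n w = 0" using v0 unfolding w_def by (simp add: linear_diff[OF lin_n] linear_cmul[OF lin_n])
      ultimately have "w \<in> span (insert v0 B)" using small split span_mono[of B "insert v0 B"] by blast
      then have "w + (G n v / G n v0) *\<^sub>R v0 \<in> span (insert v0 B)"
        by (rule span_add[OF _ span_scale[OF span_base]]) simp
      then show "v \<in> span (insert v0 B)" unfolding w_def by simp
    qed
    then show False using IH \<open>finite B\<close> by blast
  qed
qed

lemma common_kernel_nonzero:
  fixes G :: "nat \<Rightarrow> 'a::real_vector \<Rightarrow> real"
  assumes "\<forall>B :: 'a set. finite B \<longrightarrow> span B \<noteq> UNIV" and "\<And>k. k < n \<Longrightarrow> linear (G k)"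
  shows "\<exists>y. y \<noteq> 0 \<and> (\<forall>k<n. G k y = 0)"
  using common_kernel_not_finite_dim[where G = G and n = n and B = "{}"] assms by auto

lemma sequence_by_history:
  fixes P :: "nat \<Rightarrow> (nat \<Rightarrow> 'a) \<Rightarrow> 'a \<Rightarrow> bool"
  assumes step: "\<And>n h. (\<And>k. k < n \<Longrightarrow> P k h (h k)) \<Longrightarrow> \<exists>y. P n h y"
    and local: "\<And>n h h' y. (\<And>k. k < n \<Longrightarrow> h k = h' k) \<Longrightarrow> P n h y \<Longrightarrow> P n h' y"
  shows "\<exists>s. \<forall>n. P n s (s n)"
proof -
  define F where "F = rec_nat (\<lambda>_. undefined) (\<lambda>n h. h(n := SOME y. P n h y))"
  have F_Suc: "F (Suc n) = (F n)(n := SOME y. P n (F n) y)" for n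
    unfolding F_def by simp
  define s where "s k = F (Suc k) k" for k
  have agree: "F m k = s k" if "k < m" for k m
    using that by (induction m) (auto simp: F_Suc s_def less_Suc_eq)
  have "P n s (s n)" for n
  proof (induction n rule: less_induct)
    case (less n)
    have "P k (F n) (F n k)" if "k < n" for k
      using local[OF _ less[OF that], of "F n"] agree that by simp
    then have "\<exists>y. P n (F n) y" by (rule step)
    then have "P n (F n) (SOME y. P n (F n) y)" by (rule someI_ex)
    moreover have "s n = (SOME y. P n (F n) y)" by (simp add: s_def F_Suc)
    ultimately show ?case using local[of n "F n" s] agree by simp
  qed
  then show ?thesis by blast
qed

text \<open>An enumeration of all finite lists of rationals in which the j-th list has length at most
  j + 1.  The j-th rational combination of a sequence x therefore only involves x 0, ..., x j,
  which is what allows it to be normed at stage j of the recursive construction.\<close>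
definition rat_coeffs :: "nat \<Rightarrow> rat list" where
  "rat_coeffs j = take (Suc j) (from_nat (fst (prod_decode j)))"

lemma length_rat_coeffs: "length (rat_coeffs j) \<le> Suc j"
  unfolding rat_coeffs_def by simp

lemma rat_coeffs_surj: "\<exists>j. rat_coeffs j = l"
proof
  let ?j = "prod_encode (to_nat l, length l)"
  have "length l \<le> Suc ?j" using le_prod_encode_2[of "length l" "to_nat l"] by linarith
  then show "rat_coeffs ?j = l" unfolding rat_coeffs_def by simp
qed

definition rat_comb :: "(nat \<Rightarrow> 'a::real_vector) \<Rightarrow> nat \<Rightarrow> 'a" where
  "rat_comb x j = (\<Sum>i<length (rat_coeffs j). of_rat (rat_coeffs j ! i) *\<^sub>R x i)"

lemma rat_comb_cong: "(\<And>i. i \<le> j \<Longrightarrow> x i = y i) \<Longrightarrow> rat_comb x j = rat_comb y j"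
  unfolding rat_comb_def using length_rat_coeffs[of j] by (intro sum.cong) auto

lemma span_range_finite_sum:
  fixes x :: "nat \<Rightarrow> 'a::real_vector"
  assumes "v \<in> span (range x)"
  shows "\<exists>N c. v = (\<Sum>i<N. c i *\<^sub>R x i)"
  using assms
proof (induction rule: span_induct_alt)
  case base show ?case by (intro exI[of _ 0]) simp
next
  case (step r u v)
  then obtain m N c where u: "u = x m" and v: "v = (\<Sum>i<N. c i *\<^sub>R x i)" by blast
  define N' where "N' = max N (Suc m)"
  define c' where "c' i = (if i < N then c i else 0) + (if i = m then r else 0)" for i
  have "c' i *\<^sub>R x i = (if i < N then c i else 0) *\<^sub>R x i + (if i = m then r *\<^sub>R x i else 0)" for i
    unfolding c'_def by (simp add: scaleR_add_left)
  then have "(\<Sum>i<N'. c' i *\<^sub>R x i)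
        = (\<Sum>i<N'. (if i < N then c i else 0) *\<^sub>R x i) + (\<Sum>i<N'. (if i = m then r *\<^sub>R x i else 0))"
    by (simp add: sum.distrib)
  also have "(\<Sum>i<N'. (if i < N then c i else 0) *\<^sub>R x i) = v"
    unfolding v N'_def by (intro sum.mono_neutral_cong_right) auto
  also have "(\<Sum>i<N'. (if i = m then r *\<^sub>R x i else 0)) = r *\<^sub>R u"
    unfolding u N'_def by (subst sum.delta) auto
  finally show ?case by (metis add.commute)
qed

lemma span_subset_closure_rat_comb:
  fixes x :: "nat \<Rightarrow> 'a::real_normed_vector"
  shows "span (range x) \<subseteq> closure (range (rat_comb x))"
proof
  fix v assume "v \<in> span (range x)"
  then obtain N c where v: "v = (\<Sum>i<N. c i *\<^sub>R x i)" using span_range_finite_sum by blast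
  show "v \<in> closure (range (rat_comb x))"
    unfolding closure_approachable
  proof (intro allI impI)
    fix e :: real assume e: "e > 0"
    define \<delta> where "\<delta> i = e / ((real N + 1) * (norm (x i) + 1))" for i
    have "\<delta> i > 0" for i using e unfolding \<delta>_def by (intro divide_pos_pos mult_pos_pos) (auto intro: add_nonneg_pos)
    then have "\<exists>q. c i < of_rat q \<and> of_rat q < c i + \<delta> i" for i
      by (intro of_rat_dense) simp
    then obtain q where q: "\<And>i. \<bar>of_rat (q i) - c i\<bar> < \<delta> i" by (metis abs_of_pos add.commute diff_less_eq diff_gt_0_iff_gt)
    obtain j where j: "rat_coeffs j = map q [0..<N]" using rat_coeffs_surj by blast
    have "rat_comb x j - v = (\<Sum>i<N. (of_rat (q i) - c i) *\<^sub>R x i)"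
      unfolding rat_comb_def j v by (simp add: sum_subtractf scaleR_diff_left)
    then have "dist (rat_comb x j) v \<le> (\<Sum>i<N. \<bar>of_rat (q i) - c i\<bar> * norm (x i))"
      by (simp add: dist_norm norm_sum[THEN order_trans])
    also have "\<dots> \<le> (\<Sum>i<N. e / (real N + 1))"
    proof (rule sum_mono)
      fix i
      have "\<bar>of_rat (q i) - c i\<bar> * norm (x i) \<le> \<delta> i * (norm (x i) + 1)"
        using q[of i] by (intro mult_mono) auto
      moreover have "\<delta> i * (norm (x i) + 1) = e / (real N + 1)"
        using norm_ge_zero[of "x i"] unfolding \<delta>_def by (simp add: add_nonneg_eq_0_iff)
      ultimately show "\<bar>of_rat (q i) - c i\<bar> * norm (x i) \<le> e / (real N + 1)"
        by simp
    qed
    also have "\<dots> < e" using e by (simp add: field_simps)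
    finally show "\<exists>y\<in>range (rat_comb x). dist y v < e" by blast
  qed
qed

lemma norming_sequence_total:
  fixes g :: "nat \<Rightarrow> 'a::real_normed_vector \<Rightarrow> real"
  assumes lin: "\<And>k. linear (g k)" and bound: "\<And>k y. \<bar>g k y\<bar> \<le> norm y"
    and norming: "\<And>j. g j (d j) = norm (d j)"
    and w: "w \<in> closure (range d)" and vanish: "\<And>k. g k w = 0"
  shows "w = 0"
proof (rule ccontr)
  assume "w \<noteq> 0"
  then obtain j where close: "dist (d j) w < norm w / 2"
    using w unfolding closure_approachable by (metis rangeE zero_less_norm_iff half_gt_zero)
  have "norm (d j) = g j (d j - w)" using norming vanish by (simp add: linear_diff[OF lin])
  also have "\<dots> \<le> norm (d j - w)" using bound abs_le_D1 by blast
  finally have "norm w \<le> 2 * norm (d j - w)" using norm_triangle_ineq3[of w "d j"]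
    by (simp add: norm_minus_commute)
  then show False using close by (simp add: dist_norm)
qed

text \<open>At stage n, x n is
  taken in the common kernel of g 0, ..., g (n-1), and then g n is a Hahn--Banach norming
  functional for the now determined n-th rational combination.\<close>
lemma triangular_norming_system_exists:
  fixes r :: "nat \<Rightarrow> real"
  assumes inf: "\<forall>B :: 'a::real_normed_vector set. finite B \<longrightarrow> span B \<noteq> UNIV"
    and r: "\<And>n. r n > 0"
  shows "\<exists>(x :: nat \<Rightarrow> 'a) g. (\<forall>n. norm (x n) = r n)
           \<and> (\<forall>k. linear (g k) \<and> (\<forall>y. \<bar>g k y\<bar> \<le> norm y))
           \<and> (\<forall>k n. k < n \<longrightarrow> g k (x n) = 0)
           \<and> (\<forall>j. g j (rat_comb x j) = norm (rat_comb x j))"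
proof -
  define P :: "nat \<Rightarrow> (nat \<Rightarrow> 'a \<times> ('a \<Rightarrow> real)) \<Rightarrow> 'a \<times> ('a \<Rightarrow> real) \<Rightarrow> bool" where
    "P n h s \<longleftrightarrow> norm (fst s) = r n \<and> (\<forall>k<n. snd (h k) (fst s) = 0)
       \<and> linear (snd s) \<and> (\<forall>y. \<bar>snd s y\<bar> \<le> norm y)
       \<and> (let d = rat_comb (\<lambda>i. if i < n then fst (h i) else fst s) n in snd s d = norm d)"
    for n h s
  have "\<exists>s. P n h s" if hist: "\<And>k. k < n \<Longrightarrow> P k h (h k)" for n h
  proof -
    have lin: "linear (snd (h k))" if "k < n" for k using hist[OF that] unfolding P_def by blast
    obtain y where y: "y \<noteq> 0" "\<forall>k<n. snd (h k) y = 0"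
      using common_kernel_nonzero[where G = "\<lambda>k. snd (h k)" and n = n, OF inf lin] by blast
    define x where "x = (r n / norm y) *\<^sub>R y"
    have x: "norm x = r n" "\<forall>k<n. snd (h k) x = 0"
      using y r[of n] lin unfolding x_def by (simp_all add: linear_cmul)
    obtain f where "bounded_linear f" "\<forall>y. \<bar>f y\<bar> \<le> norm y"
      "f (rat_comb (\<lambda>i. if i < n then fst (h i) else x) n) = norm (rat_comb (\<lambda>i. if i < n then fst (h i) else x) n)"
      using norming_functional_exists by blast
    then have "P n h (x, f)" using x unfolding P_def Let_def fst_conv snd_conv by (simp add: bounded_linear.linear)
    then show ?thesis by blast
  qed
  moreover have "P n h' s" if "\<And>k. k < n \<Longrightarrow> h k = h' k" "P n h s" for n h h' s
  proof -
    have "rat_comb (\<lambda>i. if i < n then fst (h i) else fst s) n = rat_comb (\<lambda>i. if i < n then fst (h' i) else fst s) n"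
      using that(1) by (intro rat_comb_cong) simp
    then show ?thesis using that unfolding P_def by simp
  qed
  ultimately obtain s where s: "\<And>n. P n s (s n)" using sequence_by_history[of P] by blast
  define x where "x n = fst (s n)" for n
  define g where "g n = snd (s n)" for n
  have prefix: "rat_comb (\<lambda>i. if i < n then x i else x n) n = rat_comb x n" for n
    by (intro rat_comb_cong) simp
  have "norm (x n) = r n" "\<forall>k<n. g k (x n) = 0" "linear (g n)" "\<forall>y. \<bar>g n y\<bar> \<le> norm y"
    "g n (rat_comb (\<lambda>i. if i < n then x i else x n) n) = norm (rat_comb (\<lambda>i. if i < n then x i else x n) n)"
    for n using s[of n] unfolding P_def x_def g_def Let_def by auto
  then show ?thesis unfolding prefix by (intro exI[of _ x] exI[of _ g]) blast
qed

text \<open>A norm p on a real vector space, unrelated to the norm of the type, and the topology of the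
  metric p (x - y).  It is a Hausdorff, locally convex vector topology.\<close>
locale vector_norm =
  fixes p :: "'a::real_vector \<Rightarrow> real"
  assumes subadditive: "\<And>a b. p (a + b) \<le> p a + p b"
    and scale_le: "\<And>c a. p (c *\<^sub>R a) \<le> \<bar>c\<bar> * p a"
    and definite: "\<And>a. p a = 0 \<Longrightarrow> a = 0"
begin

lemma zero [simp]: "p 0 = 0"
  using scale_le[of 0 0] subadditive[of 0 0] by simp

lemma nonneg: "0 \<le> p a"
  using subadditive[of a "- a"] scale_le[of "-1" a] by simp

lemma minus: "p (a - b) = p (b - a)"
  using scale_le[of "-1" "a - b"] scale_le[of "-1" "b - a"] by simp

lemma triangle_diff: "p (a - c) \<le> p (a - b) + p (b - c)"
  using subadditive[of "a - b" "b - c"] by simp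

sublocale norm_metric: Metric_space UNIV "\<lambda>x y. p (x - y)"
proof
  show "p (x - y) = p (y - x)" for x y by (rule minus)
  show "p (x - y) = 0 \<longleftrightarrow> x = y" for x y using definite[of "x - y"] by auto
  show "0 \<le> p (x - y)" for x y by (rule nonneg)
  show "p (x - z) \<le> p (x - y) + p (y - z)" for x y z by (rule triangle_diff)
qed

lemma mball_eq: "norm_metric.mball x r = {y. p (x - y) < r}"
  by auto

lemma convex_mball: "convex (norm_metric.mball x r)"
  unfolding convex_def mball_eq
proof (intro ballI allI impI, simp only: mem_Collect_eq)
  fix y z :: 'a and u v :: real
  assume y: "p (x - y) < r" and z: "p (x - z) < r" and uv: "0 \<le> u" "0 \<le> v" "u + v = 1"
  have "x - (u *\<^sub>R y + v *\<^sub>R z) = u *\<^sub>R (x - y) + v *\<^sub>R (x - z)"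
    using uv by (simp add: algebra_simps flip: scaleR_add_left)
  then have "p (x - (u *\<^sub>R y + v *\<^sub>R z)) \<le> p (u *\<^sub>R (x - y)) + p (v *\<^sub>R (x - z))"
    by (simp add: subadditive)
  also have "\<dots> \<le> \<bar>u\<bar> * p (x - y) + \<bar>v\<bar> * p (x - z)"
    by (intro add_mono scale_le)
  also have "\<dots> = u * p (x - y) + v * p (x - z)" using uv by simp
  also have "\<dots> < r"
  proof (cases "u = 0")
    case True then show ?thesis using uv z by simp
  next
    case False
    then have "u * p (x - y) + v * p (x - z) < u * r + v * r"
      using uv y z by (intro add_less_le_mono mult_strict_left_mono mult_left_mono) auto
    then show ?thesis using uv by (simp flip: distrib_right)
  qed
  finally show "p (x - (u *\<^sub>R y + v *\<^sub>R z)) < r" .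
qed

lemma continuous_add:
  "continuous_map (prod_topology norm_metric.mtopology norm_metric.mtopology) norm_metric.mtopology
     (\<lambda>(x, y). x + y)"
  unfolding norm_metric.continuous_map_to_metric
proof (intro ballI allI impI)
  fix ab :: "'a \<times> 'a" and e :: real assume e: "e > 0"
  obtain a b where ab: "ab = (a, b)" by fastforce
  let ?U = "norm_metric.mball a (e / 2) \<times> norm_metric.mball b (e / 2)"
  have "p (a + b - (u + v)) < e" if "p (a - u) < e / 2" "p (b - v) < e / 2" for u v
    using subadditive[of "a - u" "b - v"] that by (simp add: algebra_simps)
  then have "\<forall>y\<in>?U. (\<lambda>(x, y). x + y) y \<in> norm_metric.mball ((\<lambda>(x, y). x + y) ab) e"
    unfolding ab by auto
  moreover have "openin (prod_topology norm_metric.mtopology norm_metric.mtopology) ?U"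
    by (simp add: openin_prod_Times_iff)
  moreover have "ab \<in> ?U" using e ab by simp
  ultimately show "\<exists>U. openin (prod_topology norm_metric.mtopology norm_metric.mtopology) U \<and> ab \<in> U
      \<and> (\<forall>y\<in>U. (\<lambda>(x, y). x + y) y \<in> norm_metric.mball ((\<lambda>(x, y). x + y) ab) e)"
    by blast
qed

lemma continuous_scale:
  "continuous_map (prod_topology euclideanreal norm_metric.mtopology) norm_metric.mtopology
     (\<lambda>(c, x). c *\<^sub>R x)"
  unfolding norm_metric.continuous_map_to_metric
proof (intro ballI allI impI)
  fix ca :: "real \<times> 'a" and e :: real assume e: "e > 0"
  obtain c a where ca: "ca = (c, a)" by fastforce
  define M where "M = \<bar>c\<bar> + 1 + p a"
  have M: "M > 0" unfolding M_def using nonneg[of a] by linarith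
  define \<delta> where "\<delta> = min 1 (e / (2 * M))"
  have \<delta>: "\<delta> > 0" "\<delta> \<le> 1" "\<delta> * M < e"
    using e M unfolding \<delta>_def by (auto simp: min_def field_simps)
  let ?U = "ball c \<delta> \<times> norm_metric.mball a \<delta>"
  have "p (c *\<^sub>R a - c' *\<^sub>R v) < e" if c': "\<bar>c - c'\<bar> < \<delta>" and v: "p (a - v) < \<delta>" for c' v
  proof -
    have "c *\<^sub>R a - c' *\<^sub>R v = c' *\<^sub>R (a - v) + (c - c') *\<^sub>R a" by (simp add: algebra_simps)
    then have "p (c *\<^sub>R a - c' *\<^sub>R v) \<le> p (c' *\<^sub>R (a - v)) + p ((c - c') *\<^sub>R a)"
      by (simp add: subadditive)
    also have "\<dots> \<le> \<bar>c'\<bar> * p (a - v) + \<bar>c - c'\<bar> * p a"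
      by (intro add_mono scale_le)
    also have "\<dots> \<le> (\<bar>c\<bar> + 1) * \<delta> + \<delta> * p a"
      using c' v \<delta> nonneg[of a] nonneg[of "a - v"]
      by (intro add_mono mult_mono) auto
    also have "\<dots> = \<delta> * M" unfolding M_def by (simp add: algebra_simps)
    finally show ?thesis using \<delta> by linarith
  qed
  then have "\<forall>y\<in>?U. (\<lambda>(c, x). c *\<^sub>R x) y \<in> norm_metric.mball ((\<lambda>(c, x). c *\<^sub>R x) ca) e"
    unfolding ca by (auto simp: dist_real_def)
  moreover have "openin (prod_topology euclideanreal norm_metric.mtopology) ?U"
    by (simp add: openin_prod_Times_iff)
  moreover have "ca \<in> ?U" using \<delta> ca by simp
  ultimately show "\<exists>U. openin (prod_topology euclideanreal norm_metric.mtopology) U \<and> ca \<in> U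
      \<and> (\<forall>y\<in>U. (\<lambda>(c, x). c *\<^sub>R x) y \<in> norm_metric.mball ((\<lambda>(c, x). c *\<^sub>R x) ca) e)"
    by blast
qed

theorem locally_convex_Hausdorff:
  "locally_convex_topology norm_metric.mtopology \<and> Hausdorff_space norm_metric.mtopology"
proof -
  have "\<exists>V. openin norm_metric.mtopology V \<and> convex V \<and> x \<in> V \<and> V \<subseteq> U"
    if U: "openin norm_metric.mtopology U" "x \<in> U" for x U
  proof -
    obtain r where "r > 0" "norm_metric.mball x r \<subseteq> U"
      using U unfolding norm_metric.openin_mtopology by blast
    then show ?thesis using convex_mball norm_metric.openin_mball by blast
  qed
  then show ?thesis
    unfolding locally_convex_topology_def
    using continuous_add continuous_scale norm_metric.Hausdorff_space_mtopology
      norm_metric.topspace_mtopology by blast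
qed

end

lemma open_if_dominated:
  fixes p :: "'a::real_normed_vector \<Rightarrow> real" and C :: real
  assumes "vector_norm p" and dom: "\<And>a. p a \<le> C * norm a"
    and U: "openin (Metric_space.mtopology UNIV (\<lambda>x y. p (x - y))) U"
  shows "open U"
  unfolding open_dist
proof
  interpret vector_norm p by fact
  fix x assume "x \<in> U"
  then obtain r where r: "r > 0" "norm_metric.mball x r \<subseteq> U"
    using U unfolding norm_metric.openin_mtopology by blast
  define s where "s = r / (\<bar>C\<bar> + 1)"
  have s: "s > 0" using r unfolding s_def by simp
  have "y \<in> U" if "dist y x < s" for y
  proof -
    have "p (x - y) \<le> \<bar>C\<bar> * norm (x - y)"
      using dom[of "x - y"] mult_right_mono[OF abs_ge_self norm_ge_zero] by (rule order_trans)
    also have "\<dots> \<le> \<bar>C\<bar> * s" using that by (simp add: dist_norm norm_minus_commute mult_left_mono)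
    also have "\<dots> < r" using r unfolding s_def by (simp add: field_simps)
    finally show ?thesis using r by auto
  qed
  then show "\<exists>e>0. \<forall>y. dist y x < e \<longrightarrow> y \<in> U" using s by blast
qed

lemma infdist_subspace_add:
  fixes T :: "'a::real_normed_vector set"
  assumes T: "subspace T"
  shows "infdist (a + b) T \<le> infdist a T + infdist b T"
proof -
  have ne: "T \<noteq> {}" using subspace_0[OF T] by blast
  have "infdist (a + b) T - dist b t \<le> infdist a T" if t: "t \<in> T" for t
  proof -
    have "infdist (a + b) T - dist b t \<le> dist a s" if s: "s \<in> T" for s
    proof -
      have "infdist (a + b) T \<le> dist (a + b) (s + t)" using T s t by (intro infdist_le subspace_add)
      also have "\<dots> \<le> dist a s + dist b t"
        using norm_triangle_ineq[of "a - s" "b - t"] by (simp add: dist_norm algebra_simps)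
      finally show ?thesis by simp
    qed
    then show ?thesis unfolding infdist_notempty[OF ne] by (intro cINF_greatest ne)
  qed
  then have "infdist (a + b) T - infdist a T \<le> dist b t" if "t \<in> T" for t using that by force
  then have "infdist (a + b) T - infdist a T \<le> infdist b T"
    unfolding infdist_notempty[OF ne] by (intro cINF_greatest ne)
  then show ?thesis by simp
qed

lemma infdist_subspace_scale:
  fixes T :: "'a::real_normed_vector set"
  assumes T: "subspace T"
  shows "infdist (c *\<^sub>R a) T \<le> \<bar>c\<bar> * infdist a T"
proof (cases "c = 0")
  case True then show ?thesis using infdist_zero[OF subspace_0[OF T]] by simp
next
  case False
  have ne: "T \<noteq> {}" using subspace_0[OF T] by blast
  have "infdist (c *\<^sub>R a) T / \<bar>c\<bar> \<le> dist a s" if s: "s \<in> T" for s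
  proof -
    have "infdist (c *\<^sub>R a) T \<le> dist (c *\<^sub>R a) (c *\<^sub>R s)" using T s by (intro infdist_le subspace_scale)
    also have "\<dots> = \<bar>c\<bar> * dist a s" by (simp add: dist_norm flip: scaleR_diff_right)
    finally show ?thesis using False by (simp add: field_simps)
  qed
  then have "infdist (c *\<^sub>R a) T / \<bar>c\<bar> \<le> infdist a T"
    unfolding infdist_notempty[OF ne] by (intro cINF_greatest ne)
  then show ?thesis using False by (simp add: field_simps)
qed

lemma infdist_subspace_le_norm:
  fixes T :: "'a::real_normed_vector set"
  assumes "subspace T"
  shows "infdist a T \<le> norm a"
  using infdist_le[OF subspace_0[OF assms], of a] by (simp add: dist_norm)

definition weighted_seminorm :: "(nat \<Rightarrow> 'a \<Rightarrow> real) \<Rightarrow> 'a \<Rightarrow> real" where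
  "weighted_seminorm g w = (\<Sum>k. (1/2)^k * \<bar>g k w\<bar>)"

lemma geometric_half_sum: "(\<lambda>k. (1/2::real)^k * C) sums (2 * C)"
  using sums_mult2[OF geometric_sums[of "1/2::real"], of C] by simp

locale unit_functionals =
  fixes g :: "nat \<Rightarrow> 'a::real_normed_vector \<Rightarrow> real"
  assumes linear: "\<And>k. linear (g k)"
    and bound: "\<And>k y. \<bar>g k y\<bar> \<le> norm y"
begin

lemma bounded_linear: "bounded_linear (g k)"
  using linear bound by (intro bounded_linear_intro[of _ 1]) (auto simp: linear_add linear_scale)

lemma summable_weighted: "summable (\<lambda>k. (1/2)^k * \<bar>g k w\<bar>)"
  by (rule summable_comparison_test'[OF sums_summable[OF geometric_half_sum[of "norm w"]]])
     (simp add: bound mult_left_mono)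

lemma weighted_nonneg: "0 \<le> weighted_seminorm g w"
  unfolding weighted_seminorm_def by (intro suminf_nonneg summable_weighted) simp

lemma weighted_le_norm: "weighted_seminorm g w \<le> 2 * norm w"
proof -
  have "weighted_seminorm g w \<le> (\<Sum>k. (1/2)^k * norm w)"
    unfolding weighted_seminorm_def
    by (intro suminf_le summable_weighted sums_summable[OF geometric_half_sum]) (simp add: bound mult_left_mono)
  also have "\<dots> = 2 * norm w" using geometric_half_sum by (rule sums_unique[symmetric])
  finally show ?thesis .
qed

lemma weighted_add: "weighted_seminorm g (a + b) \<le> weighted_seminorm g a + weighted_seminorm g b"
proof -
  have "weighted_seminorm g (a + b) \<le> (\<Sum>k. (1/2)^k * \<bar>g k a\<bar> + (1/2)^k * \<bar>g k b\<bar>)"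
    unfolding weighted_seminorm_def
    by (intro suminf_le summable_weighted summable_add)
       (simp_all add: linear_add[OF linear] abs_triangle_ineq flip: distrib_left)
  also have "\<dots> = weighted_seminorm g a + weighted_seminorm g b"
    unfolding weighted_seminorm_def by (intro suminf_add[symmetric] summable_weighted)
  finally show ?thesis .
qed

lemma weighted_scale: "weighted_seminorm g (c *\<^sub>R a) = \<bar>c\<bar> * weighted_seminorm g a"
proof -
  have "weighted_seminorm g (c *\<^sub>R a) = (\<Sum>k. \<bar>c\<bar> * ((1/2)^k * \<bar>g k a\<bar>))"
    unfolding weighted_seminorm_def by (simp add: linear_scale[OF linear] abs_mult mult.left_commute)
  also have "\<dots> = \<bar>c\<bar> * weighted_seminorm g a"
    unfolding weighted_seminorm_def by (intro suminf_mult summable_weighted)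
  finally show ?thesis .
qed

lemma weighted_eq_0: "weighted_seminorm g w = 0 \<Longrightarrow> g k w = 0"
  using suminf_eq_zero_iff[OF summable_weighted, of w] unfolding weighted_seminorm_def by simp

lemma weighted_truncation:
  assumes B: "\<And>k. \<bar>g k w\<bar> \<le> B"
  shows "weighted_seminorm g w \<le> (\<Sum>k<M. \<bar>g k w\<bar>) + 2 * B * (1/2)^M"
proof -
  have "weighted_seminorm g w = (\<Sum>n. (1/2)^(n + M) * \<bar>g (n + M) w\<bar>) + (\<Sum>k<M. (1/2)^k * \<bar>g k w\<bar>)"
    unfolding weighted_seminorm_def by (rule suminf_split_initial_segment[OF summable_weighted])
  also have "(\<Sum>k<M. (1/2::real)^k * \<bar>g k w\<bar>) \<le> (\<Sum>k<M. \<bar>g k w\<bar>)"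
    by (intro sum_mono mult_left_le_one_le) (auto simp: power_le_one)
  also have "(\<Sum>n. (1/2::real)^(n + M) * \<bar>g (n + M) w\<bar>) \<le> (\<Sum>n. (1/2)^n * (B * (1/2)^M))"
  proof (rule suminf_le)
    show "summable (\<lambda>n. (1/2::real)^(n + M) * \<bar>g (n + M) w\<bar>)"
      using summable_ignore_initial_segment[OF summable_weighted] by simp
    show "summable (\<lambda>n. (1/2::real)^n * (B * (1/2)^M))" by (rule sums_summable[OF geometric_half_sum])
    show "(1/2::real)^(n + M) * \<bar>g (n + M) w\<bar> \<le> (1/2)^n * (B * (1/2)^M)" for n
      using mult_left_mono[OF B, of "(1/2)^(n + M)" "n + M"] by (simp add: power_add algebra_simps)
  qed
  also have "\<dots> = 2 * (B * (1/2)^M)" using geometric_half_sum by (rule sums_unique[symmetric])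
  finally show ?thesis by (simp add: mult.assoc)
qed

end

text \<open>The compact convex set of the theorem is the image of the set of nonnegative sequences of
  total mass at most one, compact in the product topology by Tychonoff, under
  a \<mapsto> \<Sum>n. a n x n.\<close>
definition subprob_seqs :: "(nat \<Rightarrow> real) set" where
  "subprob_seqs = {a. (\<forall>n. 0 \<le> a n) \<and> (\<forall>N. (\<Sum>n<N. a n) \<le> 1)}"

lemma subprob_seqsD:
  assumes "a \<in> subprob_seqs"
  shows subprob_nonneg: "0 \<le> a n" and subprob_summable: "summable a" and subprob_suminf: "suminf a \<le> 1"
  using assms unfolding subprob_seqs_def
  by (auto intro!: summableI_nonneg_bounded[of _ 1] suminf_le_const)

lemma summable_subprob_diff:
  assumes a: "a \<in> subprob_seqs" and b: "b \<in> subprob_seqs"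
  shows "summable (\<lambda>n. \<bar>a n - b n\<bar>)"
proof (rule summable_comparison_test'[of "\<lambda>n. a n + b n" 0])
  show "summable (\<lambda>n. a n + b n)" using subprob_summable[OF a] subprob_summable[OF b] by (rule summable_add)
  show "norm \<bar>a n - b n\<bar> \<le> a n + b n" for n
    using subprob_nonneg[OF a, of n] subprob_nonneg[OF b, of n] by simp
qed

lemma subprob_seqs_unit: "(\<lambda>n. if n = i then 1 else 0) \<in> subprob_seqs"
  unfolding subprob_seqs_def by (auto simp: sum.delta)

lemma subprob_seqs_convex:
  assumes ab: "a \<in> subprob_seqs" "b \<in> subprob_seqs" and uv: "0 \<le> u" "0 \<le> v" "u + v = 1"
  shows "(\<lambda>n. u * a n + v * b n) \<in> subprob_seqs"
proof -
  have "(\<Sum>n<N. u * a n + v * b n) \<le> 1" for N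
  proof -
    have "(\<Sum>n<N. u * a n + v * b n) = u * (\<Sum>n<N. a n) + v * (\<Sum>n<N. b n)"
      by (simp add: sum.distrib sum_distrib_left)
    also have "\<dots> \<le> u * 1 + v * 1"
      using ab uv unfolding subprob_seqs_def by (intro add_mono mult_left_mono) auto
    finally show ?thesis using uv by simp
  qed
  then show ?thesis using ab uv unfolding subprob_seqs_def by simp
qed

lemma compactin_subprob_seqs:
  "compactin (product_topology (\<lambda>_. euclideanreal) UNIV) subprob_seqs"
proof -
  let ?P = "product_topology (\<lambda>_::nat. euclideanreal) UNIV"
  have "a n \<le> 1" if a: "a \<in> subprob_seqs" for a n
  proof -
    have "a n \<le> (\<Sum>i<Suc n. a i)" using a unfolding subprob_seqs_def by (intro member_le_sum) auto
    also have "\<dots> \<le> 1" using a unfolding subprob_seqs_def by blast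
    finally show ?thesis .
  qed
  then have sub: "subprob_seqs \<subseteq> PiE UNIV (\<lambda>_. {0..1})"
    unfolding subprob_seqs_def by auto
  have c1: "closedin ?P {a \<in> topspace ?P. a n \<in> {0..}}" for n
    by (rule closedin_continuous_map_preimage[OF continuous_map_product_projection]) auto
  have c2: "closedin ?P {a \<in> topspace ?P. (\<Sum>i<N. a i) \<in> {..1}}" for N
    by (rule closedin_continuous_map_preimage)
       (auto intro!: continuous_map_sum continuous_map_product_projection)
  have eq: "subprob_seqs = (\<Inter>n. {a \<in> topspace ?P. a n \<in> {0..}}) \<inter> (\<Inter>N. {a \<in> topspace ?P. (\<Sum>i<N. a i) \<in> {..1}})"
    unfolding subprob_seqs_def by auto
  have "closedin ?P subprob_seqs"
    unfolding eq by (intro closedin_Int closedin_Inter) (use c1 c2 in auto)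
  then show ?thesis using closed_compactin[OF _ sub] by (simp add: compactin_PiE)
qed

definition series_comb :: "(nat \<Rightarrow> 'a::real_normed_vector) \<Rightarrow> (nat \<Rightarrow> real) \<Rightarrow> 'a" where
  "series_comb x a = (\<Sum>n. a n *\<^sub>R x n)"

locale bounded_seq =
  fixes x :: "nat \<Rightarrow> 'a::banach"
  assumes norm_le_1: "\<And>n. norm (x n) \<le> 1"
begin

lemma summable_comb: "summable (\<lambda>n. \<bar>c n\<bar>) \<Longrightarrow> summable (\<lambda>n. c n *\<^sub>R x n)"
  by (rule summable_norm_cancel, rule summable_comparison_test'[of "\<lambda>n. \<bar>c n\<bar>" 0])
     (auto simp: mult_left_le norm_le_1)

lemma summable_subprob_comb: "a \<in> subprob_seqs \<Longrightarrow> summable (\<lambda>n. a n *\<^sub>R x n)"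
  using subprob_summable subprob_nonneg by (intro summable_comb) simp

lemma series_comb_diff:
  assumes "a \<in> subprob_seqs" "b \<in> subprob_seqs"
  shows "series_comb x a - series_comb x b = (\<Sum>n. (a n - b n) *\<^sub>R x n)"
  unfolding series_comb_def
  using suminf_diff[OF summable_subprob_comb[OF assms(1)] summable_subprob_comb[OF assms(2)]]
  by (simp add: scaleR_diff_left)

lemma series_comb_convex:
  assumes "a \<in> subprob_seqs" "b \<in> subprob_seqs"
  shows "series_comb x (\<lambda>n. u * a n + v * b n) = u *\<^sub>R series_comb x a + v *\<^sub>R series_comb x b"
proof -
  note sa = summable_subprob_comb[OF assms(1)] and sb = summable_subprob_comb[OF assms(2)]
  have "u *\<^sub>R series_comb x a + v *\<^sub>R series_comb x b = (\<Sum>n. u *\<^sub>R (a n *\<^sub>R x n)) + (\<Sum>n. v *\<^sub>R (b n *\<^sub>R x n))"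
    unfolding series_comb_def using sa sb by (simp add: suminf_scaleR_right)
  also have "\<dots> = (\<Sum>n. u *\<^sub>R (a n *\<^sub>R x n) + v *\<^sub>R (b n *\<^sub>R x n))"
    by (intro suminf_add summable_scaleR_right sa sb)
  finally show ?thesis unfolding series_comb_def by (simp add: scaleR_add_left)
qed

lemma series_comb_unit: "series_comb x (\<lambda>n. if n = i then 1 else 0) = x i"
proof -
  have "(\<lambda>n. (if n = i then 1 else 0) *\<^sub>R x n) = (\<lambda>n. if n = i then x n else 0)" by auto
  then show ?thesis unfolding series_comb_def using sums_single[of i x] sums_unique by metis
qed

lemma series_comb_in_closure:
  assumes "summable (\<lambda>n. \<bar>c n\<bar>)"
  shows "(\<Sum>n. c n *\<^sub>R x n) \<in> closure (span (range x))"
proof -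
  have "(\<lambda>m. \<Sum>n<m. c n *\<^sub>R x n) \<longlonglongrightarrow> (\<Sum>n. c n *\<^sub>R x n)"
    by (intro summable_LIMSEQ summable_comb assms)
  moreover have "(\<Sum>n<m. c n *\<^sub>R x n) \<in> span (range x)" for m
    by (intro span_sum span_scale span_base) simp
  ultimately show ?thesis unfolding closure_sequential by (intro exI[of _ "\<lambda>m. \<Sum>n<m. c n *\<^sub>R x n"]) blast
qed

lemma norm_series_comb_le:
  assumes a: "a \<in> subprob_seqs"
  shows "norm (series_comb x a) \<le> (\<Sum>n. a n * norm (x n))"
    and "summable (\<lambda>n. a n * norm (x n))"
proof -
  have anorm: "norm (a n *\<^sub>R x n) = a n * norm (x n)" for n
    using subprob_nonneg[OF a, of n] by simp
  show s: "summable (\<lambda>n. a n * norm (x n))"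
  proof (rule summable_comparison_test'[OF subprob_summable[OF a], of 0])
    show "norm (a n * norm (x n)) \<le> a n" for n
      using subprob_nonneg[OF a, of n] norm_le_1[of n] by (simp add: mult_left_le)
  qed
  have "norm (series_comb x a) \<le> (\<Sum>n. norm (a n *\<^sub>R x n))"
    unfolding series_comb_def by (rule summable_norm) (simp only: anorm s)
  then show "norm (series_comb x a) \<le> (\<Sum>n. a n * norm (x n))" by (simp only: anorm)
qed

lemma norm_series_comb_le_1:
  assumes a: "a \<in> subprob_seqs"
  shows "norm (series_comb x a) \<le> 1"
proof -
  have "(\<Sum>n. a n * norm (x n)) \<le> suminf a"
    using norm_series_comb_le(2)[OF a] subprob_summable[OF a] subprob_nonneg[OF a] norm_le_1
    by (intro suminf_le) (simp_all add: mult_left_le)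
  then show ?thesis using norm_series_comb_le(1)[OF a] subprob_suminf[OF a] by linarith
qed

lemma norm_series_comb_less_1:
  assumes a: "a \<in> subprob_seqs" and less: "\<And>n. norm (x n) < 1"
  shows "norm (series_comb x a) < 1"
proof (cases "\<forall>n. a n = 0")
  case True then show ?thesis unfolding series_comb_def by simp
next
  case False
  note s = norm_series_comb_le(2)[OF a]
  obtain i where "a i \<noteq> 0" using False by blast
  then have "0 < a i - a i * norm (x i)" using subprob_nonneg[OF a, of i] less[of i] by simp
  moreover have "a n * norm (x n) \<le> a n" for n
    using subprob_nonneg[OF a, of n] less[of n] by (simp add: mult_left_le)
  ultimately have "0 < (\<Sum>n. a n - a n * norm (x n))"
    by (intro suminf_pos2[of _ i] summable_diff subprob_summable[OF a] s) auto
  also have "\<dots> = suminf a - (\<Sum>n. a n * norm (x n))"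
    by (rule suminf_diff[OF subprob_summable[OF a] s, symmetric])
  finally show ?thesis using norm_series_comb_le(1)[OF a] subprob_suminf[OF a] by linarith
qed

lemma convex_series_comb: "convex (series_comb x ` subprob_seqs)"
  unfolding convex_def
proof (intro ballI allI impI)
  fix y z u v assume "y \<in> series_comb x ` subprob_seqs" "z \<in> series_comb x ` subprob_seqs"
    and uv: "0 \<le> u" "0 \<le> v" "u + v = (1::real)"
  then obtain a b where ab: "a \<in> subprob_seqs" "b \<in> subprob_seqs" "y = series_comb x a" "z = series_comb x b"
    by blast
  then have "u *\<^sub>R y + v *\<^sub>R z = series_comb x (\<lambda>n. u * a n + v * b n)"
    using series_comb_convex[OF ab(1,2)] by simp
  moreover have "(\<lambda>n. u * a n + v * b n) \<in> subprob_seqs" by (rule subprob_seqs_convex[OF ab(1,2) uv])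
  ultimately show "u *\<^sub>R y + v *\<^sub>R z \<in> series_comb x ` subprob_seqs" by blast
qed

end

text \<open>The first summand handles vectors outside the closed span, the second (by totality of the g's
  on the closed span) those inside it; on differences of combinations of the x's the first
  summand vanishes and the second depends continuously on the coefficients.\<close>
definition separating_norm :: "(nat \<Rightarrow> 'a::real_normed_vector) \<Rightarrow> (nat \<Rightarrow> 'a \<Rightarrow> real) \<Rightarrow> 'a \<Rightarrow> real" where
  "separating_norm x g w = infdist w (span (range x)) + weighted_seminorm g w"

locale triangular_system = bounded_seq x + unit_functionals g
  for x :: "nat \<Rightarrow> 'a::banach" and g +
  assumes vanish: "\<And>k n. k < n \<Longrightarrow> g k (x n) = 0"
    and total: "\<And>w. w \<in> closure (span (range x)) \<Longrightarrow> (\<And>k. g k w = 0) \<Longrightarrow> w = 0"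
begin

lemma separating_norm_le: "separating_norm x g w \<le> 3 * norm w"
  using infdist_subspace_le_norm[OF subspace_span, of w "range x"] weighted_le_norm[of w]
  unfolding separating_norm_def by linarith

sublocale sep: vector_norm "separating_norm x g"
proof
  have T: "subspace (span (range x))" by simp
  show "separating_norm x g (a + b) \<le> separating_norm x g a + separating_norm x g b" for a b
    using infdist_subspace_add[OF T, of a b] weighted_add[of a b]
    unfolding separating_norm_def by linarith
  show "separating_norm x g (c *\<^sub>R a) \<le> \<bar>c\<bar> * separating_norm x g a" for c a
    using infdist_subspace_scale[OF T, of c a] weighted_scale[of c a]
    unfolding separating_norm_def by (simp add: distrib_left)
  show "a = 0" if "separating_norm x g a = 0" for a
  proof (rule total)
    have "infdist a (span (range x)) = 0" "weighted_seminorm g a = 0"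
      using that infdist_nonneg[of a "span (range x)"] weighted_nonneg[of a]
      unfolding separating_norm_def by auto
    then show "a \<in> closure (span (range x))" "\<And>k. g k a = 0"
      using in_closure_iff_infdist_zero[of "span (range x)" a] weighted_eq_0 span_zero by blast+
  qed
qed

text \<open>Because of the triangular vanishing, the k-th functional sees only the first k+1 coefficients.\<close>
lemma functional_series_comb_diff:
  assumes a: "a \<in> subprob_seqs" and b: "b \<in> subprob_seqs"
  shows "\<bar>g k (series_comb x a - series_comb x b)\<bar> \<le> (\<Sum>n<Suc k. \<bar>a n - b n\<bar>)"
proof -
  have "g k (series_comb x a - series_comb x b) = (\<Sum>n. g k ((a n - b n) *\<^sub>R x n))"
    unfolding series_comb_diff[OF a b]
    by (intro bounded_linear.suminf[OF bounded_linear] summable_comb summable_subprob_diff a b)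
  also have "\<dots> = (\<Sum>n<Suc k. g k ((a n - b n) *\<^sub>R x n))"
  proof (rule suminf_finite)
    show "g k ((a n - b n) *\<^sub>R x n) = 0" if "n \<notin> {..<Suc k}" for n
      using that vanish[of k n] by (simp add: linear_scale[OF linear])
  qed simp
  also have "\<bar>\<dots>\<bar> \<le> (\<Sum>n<Suc k. \<bar>a n - b n\<bar>)"
  proof (rule order_trans[OF sum_abs sum_mono])
    fix n
    have "\<bar>g k (x n)\<bar> \<le> 1" using bound[of k "x n"] norm_le_1[of n] by linarith
    then show "\<bar>g k ((a n - b n) *\<^sub>R x n)\<bar> \<le> \<bar>a n - b n\<bar>"
      by (simp add: linear_scale[OF linear] abs_mult mult_left_le)
  qed
  finally show ?thesis .
qed

text \<open>Continuity of a \<mapsto> \<Sum>n. a n x n from the product topology into the p-topology: truncate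
  the weighted series at M and use that g 0, ..., g (M-1) only see finitely many coefficients.\<close>
lemma continuous_series_comb:
  "continuous_map (subtopology (product_topology (\<lambda>_. euclideanreal) UNIV) subprob_seqs)
     sep.norm_metric.mtopology (series_comb x)"
  unfolding sep.norm_metric.continuous_map_to_metric
proof (intro ballI allI impI)
  let ?S = "subtopology (product_topology (\<lambda>_::nat. euclideanreal) UNIV) subprob_seqs"
  fix a e assume "a \<in> topspace ?S" and e: "(e::real) > 0"
  then have a: "a \<in> subprob_seqs" by simp
  obtain M where M: "(1/2::real)^M < e / 8" using real_arch_pow_inv[of "e / 8" "1/2"] e by auto
  define \<delta> where "\<delta> = e / (2 * (real M * real M + 1))"
  have \<delta>: "\<delta> > 0" "real M * real M * \<delta> < e / 2"
    using e unfolding \<delta>_def by (auto simp: field_simps add_pos_nonneg)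
  define U where "U = subprob_seqs \<inter> PiE UNIV (\<lambda>i. if i < M then ball (a i) \<delta> else UNIV)"
  have "finite {i. (if i < M then ball (a i) \<delta> else UNIV) \<noteq> UNIV}"
    by (rule finite_subset[of _ "{..<M}"]) auto
  then have "openin (product_topology (\<lambda>_. euclideanreal) UNIV) (PiE UNIV (\<lambda>i. if i < M then ball (a i) \<delta> else UNIV))"
    by (simp add: openin_PiE_gen)
  then have U_open: "openin ?S U" unfolding U_def by (rule openin_subtopology_Int2)
  have aU: "a \<in> U" using a \<delta> unfolding U_def by auto
  have "series_comb x b \<in> sep.norm_metric.mball (series_comb x a) e" if "b \<in> U" for b
  proof -
    have b: "b \<in> subprob_seqs" using that unfolding U_def by blast
    have close: "\<bar>a n - b n\<bar> < \<delta>" if "n < M" for n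
    proof -
      have "b n \<in> (if n < M then ball (a n) \<delta> else UNIV)"
        using \<open>b \<in> U\<close> unfolding U_def PiE_iff by blast
      then show ?thesis using that by (simp add: dist_real_def)
    qed
    define w where "w = series_comb x a - series_comb x b"
    have "w \<in> closure (span (range x))"
      unfolding w_def series_comb_diff[OF a b]
      by (intro series_comb_in_closure summable_subprob_diff a b)
    then have dist0: "infdist w (span (range x)) = 0"
      using in_closure_iff_infdist_zero[of "span (range x)" w] span_zero by blast
    have "\<bar>g k w\<bar> \<le> 2" for k
      using bound[of k w] norm_triangle_ineq4[of "series_comb x a" "series_comb x b"]
        norm_series_comb_le_1[OF a] norm_series_comb_le_1[OF b] unfolding w_def by linarith
    then have "weighted_seminorm g w \<le> (\<Sum>k<M. \<bar>g k w\<bar>) + 2 * 2 * (1/2)^M"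
      by (rule weighted_truncation)
    also have "(\<Sum>k<M. \<bar>g k w\<bar>) \<le> (\<Sum>k<M. real M * \<delta>)"
    proof (rule sum_mono)
      fix k assume k: "k \<in> {..<M}"
      have "\<bar>g k w\<bar> \<le> (\<Sum>n<Suc k. \<bar>a n - b n\<bar>)"
        unfolding w_def by (rule functional_series_comb_diff[OF a b])
      also have "\<dots> \<le> (\<Sum>n<Suc k. \<delta>)" using k close by (intro sum_mono) (auto intro: less_imp_le)
      also have "\<dots> \<le> real M * \<delta>" using k \<delta> by (simp add: mult_right_mono)
      finally show "\<bar>g k w\<bar> \<le> real M * \<delta>" .
    qed
    finally have "separating_norm x g w < e"
      using dist0 \<delta> M unfolding separating_norm_def by simp
    then show ?thesis unfolding w_def sep.mball_eq by simp
  qed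
  then show "\<exists>U. openin ?S U \<and> a \<in> U \<and> (\<forall>b\<in>U. series_comb x b \<in> sep.norm_metric.mball (series_comb x a) e)"
    using U_open aU by blast
qed

lemma compactin_series_comb: "compactin sep.norm_metric.mtopology (series_comb x ` subprob_seqs)"
  using continuous_series_comb compactin_subprob_seqs
  by (intro image_compactin[of "subtopology _ subprob_seqs"]) (simp_all add: compactin_subtopology)

end

lemma triangular_system_exists:
  fixes r :: "nat \<Rightarrow> real"
  assumes inf: "\<forall>B :: 'a::banach set. finite B \<longrightarrow> span B \<noteq> UNIV"
    and r: "\<And>n. 0 < r n" "\<And>n. r n \<le> 1"
  shows "\<exists>(x :: nat \<Rightarrow> 'a) g. triangular_system x g \<and> (\<forall>n. norm (x n) = r n)"
proof -
  from triangular_norming_system_exists[where r = r, OF inf r(1)]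
  obtain x :: "nat \<Rightarrow> 'a" and g where x: "\<forall>n. norm (x n) = r n"
    and g: "\<forall>k. linear (g k) \<and> (\<forall>y. \<bar>g k y\<bar> \<le> norm y)"
    and vanish: "\<forall>k n. k < n \<longrightarrow> g k (x n) = 0"
    and norming: "\<forall>j. g j (rat_comb x j) = norm (rat_comb x j)"
    by blast
  have "triangular_system x g"
  proof (intro triangular_system.intro bounded_seq.intro unit_functionals.intro triangular_system_axioms.intro)
    show "norm (x n) \<le> 1" for n using x r(2)[of n] by simp
    show "linear (g k)" for k using g by simp
    show "\<bar>g k y\<bar> \<le> norm y" for k y using g by simp
    show "g k (x n) = 0" if "k < n" for k n using vanish that by simp
    show "w = 0" if "w \<in> closure (span (range x))" "\<And>k. g k w = 0" for w
    proof (rule norming_sequence_total[where g = g and d = "rat_comb x"])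
      show "w \<in> closure (range (rat_comb x))"
        using that(1) closure_mono[OF span_subset_closure_rat_comb[of x]] by auto
    qed (use g norming that(2) in simp_all)
  qed
  then show ?thesis using x by blast
qed

lemma not_remotal_from_0:
  fixes K :: "'a::real_normed_vector set"
  assumes less: "\<And>k. k \<in> K \<Longrightarrow> norm k < 1"
    and approx: "\<And>e. e > 0 \<Longrightarrow> \<exists>k\<in>K. 1 - e < norm k"
  shows "\<not> remotal K 0"
proof
  assume "remotal K 0"
  then obtain c where c: "c \<in> K" "norm c = (SUP k\<in>K. norm k)"
    unfolding remotal_def by auto
  have sup: "(SUP k\<in>K. norm k) \<ge> 1 - e" if e: "e > 0" for e
  proof -
    obtain k where "k \<in> K" "1 - e < norm k" using approx[OF e] by blast
    moreover have "bdd_above (norm ` K)" using less by (auto intro!: bdd_aboveI[of _ 1] less_imp_le)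
    ultimately show ?thesis using cSUP_upper[of k K norm] by linarith
  qed
  have "1 \<le> norm c"
  proof (rule field_le_epsilon)
    show "1 \<le> norm c + e" if "0 < e" for e using sup[OF that] c(2) by simp
  qed
  then show False using less[OF c(1)] by simp
qed

theorem mainTheorem10:
  fixes X :: "'a::banach itself"
  assumes "\<forall>B :: 'a set. finite B \<longrightarrow> span B \<noteq> UNIV"
  shows "\<exists>(\<tau> :: 'a topology) (K :: 'a set).
           locally_convex_topology \<tau> \<and> Hausdorff_space \<tau> \<and>
           (\<forall>U. openin \<tau> U \<longrightarrow> open U) \<and>
           K \<noteq> {} \<and> compactin \<tau> K \<and> convex K \<and> \<not> remotal K 0"
proof -
  define r where "r n = 1 - 1 / (real n + 2)" for n
  have r: "0 < r n" "r n < 1" for n unfolding r_def by (simp_all add: field_simps)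
  obtain x :: "nat \<Rightarrow> 'a" and g where "triangular_system x g" and x: "\<And>n. norm (x n) = r n"
    using triangular_system_exists[where r = r, OF assms] r less_imp_le by blast
  then interpret triangular_system x g by simp
  define K where "K = series_comb x ` subprob_seqs"
  have x_in_K: "x n \<in> K" for n
    unfolding K_def using series_comb_unit[of n] subprob_seqs_unit[of n] by (metis image_eqI)
  have "\<not> remotal K 0"
  proof (rule not_remotal_from_0)
    show "norm k < 1" if "k \<in> K" for k
      using that norm_series_comb_less_1 x r unfolding K_def by auto
    show "\<exists>k\<in>K. 1 - e < norm k" if "e > 0" for e
    proof -
      obtain n where "inverse (real (Suc n)) < e" using reals_Archimedean \<open>e > 0\<close> by blast
      then have "1 - e < norm (x n)" using \<open>e > 0\<close> unfolding x r_def by (simp add: field_simps)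
      then show ?thesis using x_in_K by blast
    qed
  qed
  moreover have "\<forall>U. openin sep.norm_metric.mtopology U \<longrightarrow> open U"
    using open_if_dominated[OF sep.vector_norm_axioms separating_norm_le] by blast
  ultimately show ?thesis
    using sep.locally_convex_Hausdorff compactin_series_comb convex_series_comb x_in_K
    unfolding K_def by blast
qed

end
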